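(* Let $\mathcal G=\langle V=V_{\mathrm{Min}}\uplus V_{\mathrm{Max}}, V_T, A, E, \omega\rangle$ be a finite weighted game and $c\colon V_T\to\mathbb Z$. Assume that the subgraph induced by $V\setminus V_T$ is strongly connected, that every cycle all of whose vertices lie in $V\setminus V_T$ has negative weight, and that no vertex has value $+\infty$ or $-\infty$ (with respect to $c$). Let $n=|V\setminus V_T|$. Define $\vec x^0$ by $\vec x^0_v=c(v)$ for $v\in V_T$ and $\vec x^0_v=-\infty$ for $v\in V\setminus V_T$, and $\vec x^i=F(\vec x^{i-1})$ for $i>0$. Then $\vec x^{n+k}=\vec x^n$ for all $k\ge 0$.
   Context: A weighted game has vertices $V$ partitioned into vertices of Min and of Max, targets $V_T\subseteq V_{\mathrm{Min}}$, alphabet $A$, edges $E\subseteq V\times A\times V$, weights $\omega\colon E\to\mathbb Z$, and is deadlock-free and deterministic. A cycle is a finite sequence of consecutive edges starting and ending at the same vertex (length $\ge1$); its weight is the sum of its edge weights. With target values $c$, the weight of a play is $+\infty$ if it never visits $V_T$, and otherwise the sum of its edge weights up to the first visit of some $t\in V_T$ plus $c(t)$; the value of $v$ is $\inf_{\sigma_{\mathrm{Min}}}\sup_{\sigma_{\mathrm{Max}}}$ (equal to $\sup_{\sigma_{\mathrm{Max}}}\inf_{\sigma_{\mathrm{Min}}}$) of the weight of the outcome from $v$, strategies choosing an outgoing edge after each finite play ending in a vertex of the player. The operator $F$ on $(\mathbb Z\cup\{-\infty,+\infty\})^V$ is $F(\vec x)_v=c(v)$ if $v\in V_T$, $F(\vec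 x)_v=\min_{e=(v,a,v')\in E}\omega(e)+\vec x_{v'}$ if $v\in V_{\mathrm{Min}}\setminus V_T$, and $F(\vec x)_v=\max_{e=(v,a,v')\in E}\omega(e)+\vec x_{v'}$ if $v\in V_{\mathrm{Max}}$. *)

theory Defs
  imports "HOL-Analysis.Analysis"
begin

definition src :: "'v \<times> 'a \<times> 'v \<Rightarrow> 'v" where "src e = fst e"
definition tgt :: "'v \<times> 'a \<times> 'v \<Rightarrow> 'v" where "tgt e = snd (snd e)"

definition weighted_game ::
  "'v set \<Rightarrow> 'v set \<Rightarrow> 'v set \<Rightarrow> 'v set \<Rightarrow> 'a set \<Rightarrow> ('v \<times> 'a \<times> 'v) set \<Rightarrow> bool" where
  "weighted_game V VMin VMax VT A E \<longleftrightarrow>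
     finite V \<and> finite A \<and>
     V = VMin \<union> VMax \<and> VMin \<inter> VMax = {} \<and> VT \<subseteq> VMin \<and>
     E \<subseteq> V \<times> A \<times> V \<and>
     (\<forall>v\<in>V. \<exists>e\<in>E. src e = v) \<and>
     (\<forall>v a w w'. (v, a, w) \<in> E \<longrightarrow> (v, a, w') \<in> E \<longrightarrow> w = w')"

definition is_cycle :: "('v \<times> 'a \<times> 'v) set \<Rightarrow> ('v \<times> 'a \<times> 'v) list \<Rightarrow> bool" where
  "is_cycle E cyc \<longleftrightarrow> cyc \<noteq> [] \<and> set cyc \<subseteq> E \<and>
     (\<forall>i. Suc i < length cyc \<longrightarrow> tgt (cyc ! i) = src (cyc ! Suc i)) \<and>
     tgt (last cyc) = src (hd cyc)"

definition cycle_vertices :: "('v \<times> 'a \<times> 'v) list \<Rightarrow> 'v set" where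
  "cycle_vertices cyc = src ` set cyc \<union> tgt ` set cyc"

definition cycle_weight :: "('v \<times> 'a \<times> 'v \<Rightarrow> int) \<Rightarrow> ('v \<times> 'a \<times> 'v) list \<Rightarrow> int" where
  "cycle_weight \<omega> cyc = sum_list (map \<omega> cyc)"

definition induced_rel :: "('v \<times> 'a \<times> 'v) set \<Rightarrow> 'v set \<Rightarrow> ('v \<times> 'v) set" where
  "induced_rel E U = {(u, w). \<exists>a. (u, a, w) \<in> E \<and> u \<in> U \<and> w \<in> U}"

definition strongly_connected_on :: "('v \<times> 'a \<times> 'v) set \<Rightarrow> 'v set \<Rightarrow> bool" where
  "strongly_connected_on E U \<longleftrightarrow> (\<forall>u\<in>U. \<forall>w\<in>U. (u, w) \<in> (induced_rel E U)\<^sup>*)"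

text \<open>Finite plays (histories) are a start vertex with a list of edges; strategies map a
  history (start vertex, edges so far) to the next edge.\<close>
definition last_vertex :: "'v \<Rightarrow> ('v \<times> 'a \<times> 'v) list \<Rightarrow> 'v" where
  "last_vertex v h = (if h = [] then v else tgt (last h))"

type_synonym ('v, 'a) strategy = "'v \<Rightarrow> ('v \<times> 'a \<times> 'v) list \<Rightarrow> 'v \<times> 'a \<times> 'v"

definition strategies :: "('v \<times> 'a \<times> 'v) set \<Rightarrow> 'v set \<Rightarrow> ('v, 'a) strategy set" where
  "strategies E P = {\<sigma>. \<forall>v h. last_vertex v h \<in> P \<longrightarrow>
      \<sigma> v h \<in> E \<and> src (\<sigma> v h) = last_vertex v h}"

primrec outcome_prefix ::
  "'v set \<Rightarrow> ('v, 'a) strategy \<Rightarrow> ('v, 'a) strategy \<Rightarrow> 'v \<Rightarrow> nat \<Rightarrow> ('v \<times> 'a \<times> 'v) list" where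
  "outcome_prefix VMin \<sigma>Min \<sigma>Max v 0 = []"
| "outcome_prefix VMin \<sigma>Min \<sigma>Max v (Suc n) =
     (let h = outcome_prefix VMin \<sigma>Min \<sigma>Max v n in
      h @ [if last_vertex v h \<in> VMin then \<sigma>Min v h else \<sigma>Max v h])"

definition play_weight ::
  "'v set \<Rightarrow> 'v set \<Rightarrow> ('v \<times> 'a \<times> 'v \<Rightarrow> int) \<Rightarrow> ('v \<Rightarrow> int) \<Rightarrow>
   ('v, 'a) strategy \<Rightarrow> ('v, 'a) strategy \<Rightarrow> 'v \<Rightarrow> ereal" where
  "play_weight VMin VT \<omega> c \<sigma>Min \<sigma>Max v =
    (let p = outcome_prefix VMin \<sigma>Min \<sigma>Max v in
     if \<exists>n. last_vertex v (p n) \<in> VT then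
       (let n = (LEAST n. last_vertex v (p n) \<in> VT) in
        ereal (real_of_int (sum_list (map \<omega> (p n)) + c (last_vertex v (p n)))))
     else \<infinity>)"

definition game_value ::
  "'v set \<Rightarrow> 'v set \<Rightarrow> 'v set \<Rightarrow> ('v \<times> 'a \<times> 'v) set \<Rightarrow> ('v \<times> 'a \<times> 'v \<Rightarrow> int) \<Rightarrow>
   ('v \<Rightarrow> int) \<Rightarrow> 'v \<Rightarrow> ereal" where
  "game_value VMin VMax VT E \<omega> c v =
    (INF \<sigma>Min\<in>strategies E VMin. SUP \<sigma>Max\<in>strategies E VMax.
       play_weight VMin VT \<omega> c \<sigma>Min \<sigma>Max v)"

text \<open>The operator F (meaningful on vertices of V).\<close>
definition F_op ::
  "'v set \<Rightarrow> 'v set \<Rightarrow> ('v \<times> 'a \<times> 'v) set \<Rightarrow> ('v \<times> 'a \<times> 'v \<Rightarrow> int) \<Rightarrow> ('v \<Rightarrow> int) \<Rightarrow>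
   ('v \<Rightarrow> ereal) \<Rightarrow> ('v \<Rightarrow> ereal)" where
  "F_op VMin VT E \<omega> c x = (\<lambda>v.
     if v \<in> VT then ereal (real_of_int (c v))
     else if v \<in> VMin then Min {ereal (real_of_int (\<omega> e)) + x (tgt e) | e. e \<in> E \<and> src e = v}
     else Max {ereal (real_of_int (\<omega> e)) + x (tgt e) | e. e \<in> E \<and> src e = v})"

definition x_init :: "'v set \<Rightarrow> ('v \<Rightarrow> int) \<Rightarrow> 'v \<Rightarrow> ereal" where
  "x_init VT c = (\<lambda>v. if v \<in> VT then ereal (real_of_int (c v)) else -\<infinity>)"

end

theory Submission
  imports Defs
begin

text \<open>If some vertex still increased between steps \<open>n\<close> and \<open>n + 1\<close>, where
  \<open>n = |V - V\<^sub>T|\<close>, follow the edges realising the optimum backwards: each successor must also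
  have increased one step earlier, so we obtain a path of \<open>n + 1\<close> non-target vertices, which
  repeats a vertex. Along the resulting cycle the values telescope, and monotonicity of the
  iteration then bounds a finite value by itself plus the (negative) cycle weight.\<close>

definition out_edges :: "('v \<times> 'a \<times> 'v) set \<Rightarrow> 'v \<Rightarrow> ('v \<times> 'a \<times> 'v) set" where
  "out_edges E v = {e \<in> E. src e = v}"

definition F_iter ::
  "'v set \<Rightarrow> 'v set \<Rightarrow> ('v \<times> 'a \<times> 'v) set \<Rightarrow> ('v \<times> 'a \<times> 'v \<Rightarrow> int) \<Rightarrow> ('v \<Rightarrow> int) \<Rightarrow>
   nat \<Rightarrow> 'v \<Rightarrow> ereal" where
  "F_iter VMin VT E \<omega> c i = (F_op VMin VT E \<omega> c ^^ i) (x_init VT c)"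

lemma F_iter_Suc: "F_iter VMin VT E \<omega> c (Suc i) = F_op VMin VT E \<omega> c (F_iter VMin VT E \<omega> c i)"
  by (simp add: F_iter_def)

lemma F_op_nontarget:
  assumes "v \<notin> VT"
  shows "F_op VMin VT E \<omega> c x v =
    (if v \<in> VMin then Min ((\<lambda>e. ereal (\<omega> e) + x (tgt e)) ` out_edges E v)
     else Max ((\<lambda>e. ereal (\<omega> e) + x (tgt e)) ` out_edges E v))"
proof -
  have "{ereal (\<omega> e) + x (tgt e) | e. e \<in> E \<and> src e = v} =
        (\<lambda>e. ereal (\<omega> e) + x (tgt e)) ` out_edges E v"
    unfolding out_edges_def by blast
  then show ?thesis
    using assms by (simp add: F_op_def)
qed

lemma F_iter_target: "v \<in> VT \<Longrightarrow> F_iter VMin VT E \<omega> c i v = ereal (c v)"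
  by (cases i) (simp_all add: F_iter_def x_init_def F_op_def)

lemma ereal_telescope_le:
  fixes f :: "nat \<Rightarrow> ereal" and w :: "nat \<Rightarrow> int"
  assumes "a \<le> b" and step: "\<And>j. a \<le> j \<Longrightarrow> j < b \<Longrightarrow> f j \<le> ereal (w j) + f (Suc j)"
  shows "f a \<le> ereal (\<Sum>j\<in>{a..<b}. w j) + f b"
  using assms
proof (induction b rule: dec_induct)
  case base
  then show ?case by simp
next
  case (step b)
  have "f a \<le> ereal (\<Sum>j\<in>{a..<b}. w j) + f b"
    using step.IH step.prems by simp
  also have "\<dots> \<le> ereal (\<Sum>j\<in>{a..<b}. w j) + (ereal (w b) + f (Suc b))"
    using step.prems step.hyps by (intro add_left_mono) simp
  also have "\<dots> = ereal (\<Sum>j\<in>{a..<Suc b}. w j) + f (Suc b)"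
    using step.hyps by (simp flip: add.assoc)
  finally show ?case .
qed

lemma Min_image_mono:
  fixes f g :: "'a \<Rightarrow> 'b::linorder"
  assumes "finite S" "S \<noteq> {}" "\<And>x. x \<in> S \<Longrightarrow> f x \<le> g x"
  shows "Min (f ` S) \<le> Min (g ` S)"
  using assms by (auto intro!: Min.boundedI intro: order_trans[OF Min_le])

lemma Max_image_mono:
  fixes f g :: "'a \<Rightarrow> 'b::linorder"
  assumes "finite S" "S \<noteq> {}" "\<And>x. x \<in> S \<Longrightarrow> f x \<le> g x"
  shows "Max (f ` S) \<le> Max (g ` S)"
  using assms by (auto intro!: Max.boundedI intro: order_trans[OF _ Max_ge])

lemma pigeonhole_repeat:
  assumes "finite U" and "f ` {0..card U} \<subseteq> U"
  obtains a b where "a < b" "b \<le> card U" "f a = f b"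
proof -
  have "\<not> inj_on f {0..card U}"
    using card_inj_on_le[OF _ assms(2) assms(1)] by auto
  then obtain a b where "a \<le> card U" "b \<le> card U" "a \<noteq> b" "f a = f b"
    unfolding inj_on_def by auto
  then show ?thesis
    using that by (metis linorder_neqE_nat)
qed

lemma is_cycle_path_segment:
  assumes "a < b" "vs a = vs b"
    and path: "\<And>j. a \<le> j \<Longrightarrow> j < b \<Longrightarrow> es j \<in> E \<and> src (es j) = vs j \<and> tgt (es j) = vs (Suc j)"
  shows "is_cycle E (map es [a..<b])" and "cycle_vertices (map es [a..<b]) \<subseteq> vs ` {a..b}"
proof -
  have "last (map es [a..<b]) = es (b - 1)" "hd (map es [a..<b]) = es a"
    using \<open>a < b\<close> by (simp_all add: last_map hd_map)
  moreover have "tgt (es (b - 1)) = vs b" "src (es a) = vs a"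
    using path[of "b - 1"] path[of a] \<open>a < b\<close> by simp_all
  ultimately show "is_cycle E (map es [a..<b])"
    using assms path unfolding is_cycle_def by (auto simp add: nth_append)
  show "cycle_vertices (map es [a..<b]) \<subseteq> vs ` {a..b}"
    unfolding cycle_vertices_def using path by fastforce
qed

context
  fixes V VMin VMax VT :: "'v set" and A :: "'a set" and E :: "('v \<times> 'a \<times> 'v) set"
    and \<omega> :: "'v \<times> 'a \<times> 'v \<Rightarrow> int" and c :: "'v \<Rightarrow> int"
  assumes game: "weighted_game V VMin VMax VT A E"
begin

lemma finite_vertices: "finite V"
  using game unfolding weighted_game_def by (elim conjE) assumption

lemma finite_alphabet: "finite A"
  using game unfolding weighted_game_def by (elim conjE) assumption

lemma edges_subset: "E \<subseteq> V \<times> A \<times> V"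
  using game unfolding weighted_game_def by (elim conjE) assumption

lemma deadlock_free: "\<forall>v\<in>V. \<exists>e\<in>E. src e = v"
  using game unfolding weighted_game_def by (elim conjE) assumption

lemma edge_target_in_V: "e \<in> E \<Longrightarrow> tgt e \<in> V"
  using edges_subset unfolding tgt_def by auto

lemma finite_out_edges: "finite (out_edges E v)"
proof -
  have "finite (V \<times> A \<times> V)"
    using finite_vertices finite_alphabet by simp
  then have "finite E"
    using edges_subset by (rule finite_subset[rotated])
  then show ?thesis
    unfolding out_edges_def by simp
qed

lemma out_edges_nonempty: "v \<in> V \<Longrightarrow> out_edges E v \<noteq> {}"
  using deadlock_free unfolding out_edges_def by blast

lemma F_op_cong:
  assumes "\<forall>u\<in>V. x u = y u"
  shows "F_op VMin VT E \<omega> c x v = F_op VMin VT E \<omega> c y v"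
proof (cases "v \<in> VT")
  case False
  have "x (tgt e) = y (tgt e)" if "e \<in> out_edges E v" for e
    using that assms edge_target_in_V unfolding out_edges_def by blast
  then have "(\<lambda>e. ereal (\<omega> e) + x (tgt e)) ` out_edges E v = (\<lambda>e. ereal (\<omega> e) + y (tgt e)) ` out_edges E v"
    by (intro image_cong) simp_all
  then show ?thesis
    using False by (simp add: F_op_nontarget)
qed (simp add: F_op_def)

lemma F_op_mono:
  assumes "\<forall>u\<in>V. x u \<le> y u" and "v \<in> V"
  shows "F_op VMin VT E \<omega> c x v \<le> F_op VMin VT E \<omega> c y v"
proof (cases "v \<in> VT")
  case False
  let ?f = "\<lambda>x e. ereal (\<omega> e) + x (tgt e)"
  have le: "?f x e \<le> ?f y e" if "e \<in> out_edges E v" for e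
  proof -
    have "tgt e \<in> V"
      using that edge_target_in_V unfolding out_edges_def by blast
    then show ?thesis
      using assms(1) by (simp add: add_left_mono)
  qed
  have "Min (?f x ` out_edges E v) \<le> Min (?f y ` out_edges E v)"
    "Max (?f x ` out_edges E v) \<le> Max (?f y ` out_edges E v)"
    using le finite_out_edges out_edges_nonempty[OF \<open>v \<in> V\<close>]
    by (blast intro: Min_image_mono Max_image_mono)+
  then show ?thesis
    using False by (simp add: F_op_nontarget)
qed (simp add: F_op_def)

lemma F_iter_not_infinity: "v \<in> V \<Longrightarrow> F_iter VMin VT E \<omega> c i v \<noteq> \<infinity>"
proof (induction i arbitrary: v)
  case 0
  then show ?case by (simp add: F_iter_def x_init_def)
next
  case (Suc i)
  let ?S = "(\<lambda>e. ereal (\<omega> e) + F_iter VMin VT E \<omega> c i (tgt e)) ` out_edges E v"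
  have "s \<noteq> \<infinity>" if "s \<in> ?S" for s
  proof -
    obtain e where "e \<in> out_edges E v" "s = ereal (\<omega> e) + F_iter VMin VT E \<omega> c i (tgt e)"
      using \<open>s \<in> ?S\<close> by blast
    moreover have "tgt e \<in> V"
      using \<open>e \<in> out_edges E v\<close> edge_target_in_V unfolding out_edges_def by blast
    ultimately show ?thesis
      using Suc.IH by simp
  qed
  moreover have "finite ?S" "?S \<noteq> {}"
    using finite_out_edges out_edges_nonempty[OF Suc.prems] by simp_all
  ultimately have "Min ?S \<noteq> \<infinity>" "Max ?S \<noteq> \<infinity>"
    using Min_in Max_in by blast+
  then show ?case
    by (cases "v \<in> VT") (simp add: F_iter_Suc F_op_def, simp add: F_iter_Suc F_op_nontarget)
qed

lemma F_iter_Suc_increasing: "v \<in> V \<Longrightarrow> F_iter VMin VT E \<omega> c i v \<le> F_iter VMin VT E \<omega> c (Suc i) v"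
proof (induction i arbitrary: v)
  case 0
  then show ?case
    by (cases "v \<in> VT") (simp_all add: F_iter_target, simp add: F_iter_def x_init_def)
next
  case (Suc i)
  then show ?case
    by (simp only: F_iter_Suc[of _ _ _ _ _ "Suc i"] F_iter_Suc[of _ _ _ _ _ i])
       (intro F_op_mono; simp add: F_iter_Suc)
qed

lemma F_iter_mono:
  assumes "v \<in> V" "i \<le> j"
  shows "F_iter VMin VT E \<omega> c i v \<le> F_iter VMin VT E \<omega> c j v"
  using assms(2)
proof (induction j rule: dec_induct)
  case (step j)
  show ?case
    using step.IH F_iter_Suc_increasing[OF assms(1), of j] by (rule order_trans)
qed simp

text \<open>For Min the witness is an edge optimal at step \<open>m + 1\<close>, for Max one optimal at step
  \<open>m + 2\<close>.\<close>

lemma F_iter_optimal_edge: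
  assumes "v \<in> V" "v \<notin> VT"
  obtains e where "e \<in> out_edges E v"
    "F_iter VMin VT E \<omega> c (Suc (Suc m)) v \<le> ereal (\<omega> e) + F_iter VMin VT E \<omega> c (Suc m) (tgt e)"
    "ereal (\<omega> e) + F_iter VMin VT E \<omega> c m (tgt e) \<le> F_iter VMin VT E \<omega> c (Suc m) v"
proof -
  let ?X = "F_iter VMin VT E \<omega> c"
  let ?S = "out_edges E v" and ?f = "\<lambda>i e. ereal (\<omega> e) + ?X i (tgt e)"
  have S: "finite ?S" "?S \<noteq> {}"
    using finite_out_edges out_edges_nonempty[OF \<open>v \<in> V\<close>] .
  have X: "?X (Suc i) v = (if v \<in> VMin then Min (?f i ` ?S) else Max (?f i ` ?S))" for i
    using \<open>v \<notin> VT\<close> by (simp add: F_iter_Suc F_op_nontarget)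
  show ?thesis
  proof (cases "v \<in> VMin")
    case True
    have "Min (?f m ` ?S) \<in> ?f m ` ?S"
      using S by (intro Min_in) auto
    then obtain e where "e \<in> ?S" "Min (?f m ` ?S) = ?f m e"
      by blast
    moreover have "Min (?f (Suc m) ` ?S) \<le> ?f (Suc m) e"
      using S \<open>e \<in> ?S\<close> by simp
    ultimately show ?thesis
      using that X[of m] X[of "Suc m"] True by simp
  next
    case False
    have "Max (?f (Suc m) ` ?S) \<in> ?f (Suc m) ` ?S"
      using S by (intro Max_in) auto
    then obtain e where "e \<in> ?S" "Max (?f (Suc m) ` ?S) = ?f (Suc m) e"
      by blast
    moreover have "?f m e \<le> Max (?f m ` ?S)"
      using S \<open>e \<in> ?S\<close> by simp
    ultimately show ?thesis
      using that X[of m] X[of "Suc m"] False by simp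
  qed
qed

lemma F_iter_increase_successor:
  assumes "v \<in> V" "v \<notin> VT"
    and increase: "F_iter VMin VT E \<omega> c (Suc m) v < F_iter VMin VT E \<omega> c (Suc (Suc m)) v"
  obtains e where "e \<in> out_edges E v"
    "F_iter VMin VT E \<omega> c m (tgt e) < F_iter VMin VT E \<omega> c (Suc m) (tgt e)"
    "F_iter VMin VT E \<omega> c (Suc (Suc m)) v \<le> ereal (\<omega> e) + F_iter VMin VT E \<omega> c (Suc m) (tgt e)"
proof -
  let ?X = "F_iter VMin VT E \<omega> c"
  obtain e where e: "e \<in> out_edges E v"
    and upper: "?X (Suc (Suc m)) v \<le> ereal (\<omega> e) + ?X (Suc m) (tgt e)"
    and lower: "ereal (\<omega> e) + ?X m (tgt e) \<le> ?X (Suc m) v"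
    using F_iter_optimal_edge[OF assms(1,2)] .
  have "ereal (\<omega> e) + ?X m (tgt e) < ereal (\<omega> e) + ?X (Suc m) (tgt e)"
    using lower increase upper by (rule le_less_trans[OF _ less_le_trans])
  then have "?X m (tgt e) < ?X (Suc m) (tgt e)"
    by (metis add_left_mono not_le)
  then show ?thesis
    using that e upper by blast
qed

lemma F_iter_increasing_path:
  assumes "v \<in> V" "F_iter VMin VT E \<omega> c n v < F_iter VMin VT E \<omega> c (Suc n) v"
  shows "\<exists>vs es. vs 0 = v \<and>
    (\<forall>j\<le>n. vs j \<in> V - VT \<and>
       F_iter VMin VT E \<omega> c (n - j) (vs j) < F_iter VMin VT E \<omega> c (Suc (n - j)) (vs j)) \<and>
    (\<forall>j<n. es j \<in> E \<and> src (es j) = vs j \<and> tgt (es j) = vs (Suc j) \<and>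
       F_iter VMin VT E \<omega> c (Suc (n - j)) (vs j)
         \<le> ereal (\<omega> (es j)) + F_iter VMin VT E \<omega> c (n - j) (vs (Suc j)))"
  using assms
proof (induction n arbitrary: v)
  case 0
  then have "v \<notin> VT"
    by (auto simp add: F_iter_target)
  then show ?case
    using 0 by (intro exI[of _ "\<lambda>_. v"]) auto
next
  case (Suc n)
  then have "v \<notin> VT"
    by (auto simp add: F_iter_target)
  then obtain e where e: "e \<in> out_edges E v"
    and increase: "F_iter VMin VT E \<omega> c n (tgt e) < F_iter VMin VT E \<omega> c (Suc n) (tgt e)"
    and upper: "F_iter VMin VT E \<omega> c (Suc (Suc n)) v
                  \<le> ereal (\<omega> e) + F_iter VMin VT E \<omega> c (Suc n) (tgt e)"
    using F_iter_increase_successor[OF Suc.prems(1)] Suc.prems(2) by blast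
  have "tgt e \<in> V"
    using e edge_target_in_V unfolding out_edges_def by blast
  then obtain vs es where "vs 0 = tgt e"
    and "\<forall>j\<le>n. vs j \<in> V - VT \<and>
       F_iter VMin VT E \<omega> c (n - j) (vs j) < F_iter VMin VT E \<omega> c (Suc (n - j)) (vs j)"
    and "\<forall>j<n. es j \<in> E \<and> src (es j) = vs j \<and> tgt (es j) = vs (Suc j) \<and>
       F_iter VMin VT E \<omega> c (Suc (n - j)) (vs j)
         \<le> ereal (\<omega> (es j)) + F_iter VMin VT E \<omega> c (n - j) (vs (Suc j))"
    using Suc.IH increase by blast
  then show ?case
    using \<open>v \<in> V\<close> \<open>v \<notin> VT\<close> e upper Suc.prems(2) unfolding out_edges_def
    by (intro exI[of _ "case_nat v vs"] exI[of _ "case_nat e es"]) (auto split: nat.split)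
qed

lemma F_iter_stable:
  assumes neg: "\<And>cyc. is_cycle E cyc \<Longrightarrow> cycle_vertices cyc \<subseteq> V - VT \<Longrightarrow> cycle_weight \<omega> cyc < 0"
    and "v \<in> V"
  shows "F_iter VMin VT E \<omega> c (Suc (card (V - VT))) v = F_iter VMin VT E \<omega> c (card (V - VT)) v"
proof (rule ccontr)
  let ?X = "F_iter VMin VT E \<omega> c" and ?n = "card (V - VT)"
  assume "?X (Suc ?n) v \<noteq> ?X ?n v"
  then have "?X ?n v < ?X (Suc ?n) v"
    using F_iter_Suc_increasing[OF \<open>v \<in> V\<close>, of ?n] by simp
  then obtain vs es where
    vertices: "\<And>j. j \<le> ?n \<Longrightarrow> vs j \<in> V - VT \<and> ?X (?n - j) (vs j) < ?X (Suc (?n - j)) (vs j)"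
    and edges: "\<And>j. j < ?n \<Longrightarrow> es j \<in> E \<and> src (es j) = vs j \<and> tgt (es j) = vs (Suc j) \<and>
                  ?X (Suc (?n - j)) (vs j) \<le> ereal (\<omega> (es j)) + ?X (?n - j) (vs (Suc j))"
    using F_iter_increasing_path[OF \<open>v \<in> V\<close>] by blast
  have "finite (V - VT)"
    using finite_vertices by simp
  moreover have "vs ` {0..?n} \<subseteq> V - VT"
    using vertices by auto
  ultimately obtain a b where ab: "a < b" "b \<le> ?n" "vs a = vs b"
    by (rule pigeonhole_repeat)
  define f where "f j = ?X (Suc (?n - j)) (vs j)" for j
  define W where "W = (\<Sum>j\<in>{a..<b}. \<omega> (es j))"
  have path: "es j \<in> E \<and> src (es j) = vs j \<and> tgt (es j) = vs (Suc j)" if "a \<le> j" "j < b" for j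
    using edges[of j] that ab by simp
  have "is_cycle E (map es [a..<b])" "cycle_vertices (map es [a..<b]) \<subseteq> vs ` {a..b}"
    using is_cycle_path_segment[OF ab(1) ab(3) path] by blast+
  moreover have "vs ` {a..b} \<subseteq> V - VT"
    using vertices ab by auto
  ultimately have "cycle_weight \<omega> (map es [a..<b]) < 0"
    using neg by blast
  then have "W < 0"
    by (simp add: W_def cycle_weight_def interv_sum_list_conv_sum_set_nat)
  have "f a \<le> ereal W + f b"
    unfolding W_def
  proof (rule ereal_telescope_le)
    fix j assume "a \<le> j" "j < b"
    then have "Suc (?n - Suc j) = ?n - j"
      using ab by simp
    then show "f j \<le> ereal (\<omega> (es j)) + f (Suc j)"
      using edges[of j] \<open>j < b\<close> ab unfolding f_def by simp
  qed (use ab in simp)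
  also have "\<dots> \<le> ereal W + f a"
    using F_iter_mono[of "vs a" "Suc (?n - b)" "Suc (?n - a)"] vertices[of a] ab
    unfolding f_def by (intro add_left_mono) simp
  finally have "f a \<le> ereal W + f a" .
  moreover have "f a \<noteq> \<infinity>" "f a \<noteq> -\<infinity>"
    using F_iter_not_infinity vertices[of a] ab unfolding f_def by auto
  ultimately show False
    using \<open>W < 0\<close> by (cases "f a") simp_all
qed

lemma F_iter_constant_after:
  assumes "\<forall>u\<in>V. F_iter VMin VT E \<omega> c (Suc n) u = F_iter VMin VT E \<omega> c n u" and "v \<in> V"
  shows "F_iter VMin VT E \<omega> c (n + k) v = F_iter VMin VT E \<omega> c n v"
  using \<open>v \<in> V\<close>
proof (induction k arbitrary: v)
  case (Suc k)
  have "F_iter VMin VT E \<omega> c (n + Suc k) v = F_op VMin VT E \<omega> c (F_iter VMin VT E \<omega> c (n + k)) v"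
    by (simp add: F_iter_Suc)
  also have "\<dots> = F_op VMin VT E \<omega> c (F_iter VMin VT E \<omega> c n) v"
    using Suc.IH by (intro F_op_cong) blast
  also have "\<dots> = F_iter VMin VT E \<omega> c n v"
    using assms(1) Suc.prems by (simp add: F_iter_Suc)
  finally show ?case .
qed simp

end

theorem proposition4:
  fixes V VMin VMax VT :: "'v set" and A :: "'a set" and E :: "('v \<times> 'a \<times> 'v) set"
    and \<omega> :: "'v \<times> 'a \<times> 'v \<Rightarrow> int" and c :: "'v \<Rightarrow> int"
  assumes game: "weighted_game V VMin VMax VT A E"
    and sc: "strongly_connected_on E (V - VT)"
    and neg: "\<And>cyc. is_cycle E cyc \<Longrightarrow> cycle_vertices cyc \<subseteq> V - VT \<Longrightarrow> cycle_weight \<omega> cyc < 0"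
    and fin_val: "\<And>v. v \<in> V \<Longrightarrow> game_value VMin VMax VT E \<omega> c v \<noteq> \<infinity> \<and>
                                   game_value VMin VMax VT E \<omega> c v \<noteq> -\<infinity>"
  shows "\<forall>k v. v \<in> V \<longrightarrow>
     ((F_op VMin VT E \<omega> c) ^^ (card (V - VT) + k)) (x_init VT c) v =
     ((F_op VMin VT E \<omega> c) ^^ (card (V - VT))) (x_init VT c) v"
proof (intro allI impI)
  fix k v assume "v \<in> V"
  have "\<forall>u\<in>V. F_iter VMin VT E \<omega> c (Suc (card (V - VT))) u = F_iter VMin VT E \<omega> c (card (V - VT)) u"
    using F_iter_stable[OF game neg] by blast
  then show "((F_op VMin VT E \<omega> c) ^^ (card (V - VT) + k)) (x_init VT c) v =
             ((F_op VMin VT E \<omega> c) ^^ (card (V - VT))) (x_init VT c) v"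
    using F_iter_constant_after[OF game _ \<open>v \<in> V\<close>] unfolding F_iter_def by blast
qed

end
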